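(* Let $\{X(t)\colon t\in\mathbb{R}\}$ be a centered stationary Gaussian process with twice differentiable covariance function $r(\tau)=\mathbb{E}(X(t)X(t+\tau))$. (a) If $r(0)=-\ddot r(0)=1$, then $|r(t)|\le1$, $|\dot r(t)|\le1$, $|\ddot r(t)|\le1$ for all $t$. (b) If $r(0)=-\ddot r(0)=1$ and $\int_0^\infty(|r(\tau)|+|\dot r(\tau)|+|\ddot r(\tau)|)\,d\tau<\infty$, then $r,\dot r,\ddot r\in L^p(\mathbb{R})$ for all $p\ge1$. (c) If $r(0)=-\ddot r(0)=1$ and the process is $\alpha$-mixing with $\alpha(T)\sim T^{-\mu}$ as $T\to\infty$ for some $\mu>4$, then $r,\dot r,\ddot r\in L^p(\mathbb{R})$ for all $p\ge1$; in particular $\int_0^\infty(|r(\tau)|+|\dot r(\tau)|+|\ddot r(\tau)|)\,d\tau<\infty$.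
   Context: For $-\infty\le a\le b\le\infty$, $\mathcal F_a^b$ is the $\sigma$-algebra generated by $\{X(s)\colon a\le s\le b\}$, and $\alpha(t)=\sup\{|\mathbf P(U)\mathbf P(V)-\mathbf P(U\cap V)|\colon U\in\mathcal F_{-\infty}^0,\ V\in\mathcal F_t^\infty\}$. *)

theory Defs
  imports "HOL-Probability.Probability" "HOL-Library.Landau_Symbols"
begin

definition centered_gaussian_rv :: "'a measure \<Rightarrow> ('a \<Rightarrow> real) \<Rightarrow> bool" where
  "centered_gaussian_rv M Y \<longleftrightarrow>
     Y \<in> borel_measurable M \<and>
     ((AE \<omega> in M. Y \<omega> = 0) \<or> (\<exists>s>0. distributed M lborel Y (normal_density 0 s)))"

text \<open>A centered Gaussian process: every finite linear combination is centered Gaussian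
  (equivalently all finite-dimensional distributions are centered multivariate normal).\<close>
definition centered_gaussian_process :: "'a measure \<Rightarrow> (real \<Rightarrow> 'a \<Rightarrow> real) \<Rightarrow> bool" where
  "centered_gaussian_process M X \<longleftrightarrow>
     (\<forall>t. X t \<in> borel_measurable M) \<and>
     (\<forall>S c. finite S \<longrightarrow> centered_gaussian_rv M (\<lambda>\<omega>. \<Sum>s\<in>S. c s * X s \<omega>))"

definition gen_sigma :: "'a measure \<Rightarrow> (real \<Rightarrow> 'a \<Rightarrow> real) \<Rightarrow> real set \<Rightarrow> 'a set set" where
  "gen_sigma M X I = sigma_sets (space M)
     {X s -` B \<inter> space M | s B. s \<in> I \<and> B \<in> sets borel}"

definition alpha_coeff :: "'a measure \<Rightarrow> (real \<Rightarrow> 'a \<Rightarrow> real) \<Rightarrow> real \<Rightarrow> real" where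
  "alpha_coeff M X t = Sup {\<bar>measure M U * measure M V - measure M (U \<inter> V)\<bar> | U V.
      U \<in> gen_sigma M X {..0} \<and> V \<in> gen_sigma M X {t..}}"

definition alpha_mixing :: "'a measure \<Rightarrow> (real \<Rightarrow> 'a \<Rightarrow> real) \<Rightarrow> bool" where
  "alpha_mixing M X \<longleftrightarrow> (alpha_coeff M X \<longlongrightarrow> 0) at_top"

end

theory Submission
  imports Defs
begin

text \<open>
  Part (a) is Cauchy--Schwarz, applied to \<open>X 0\<close>, \<open>X t\<close> and to difference quotients of \<open>X\<close>:
  their covariances are difference quotients of \<open>r\<close>, which converge to \<open>r' t\<close> and
  \<open>-r'' t\<close>, while the variance \<open>(2 - 2 r h)/h\<^sup>2\<close> of \<open>(X h - X 0)/h\<close> tends to \<open>-r'' 0 = 1\<close>.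
  Part (b) follows since \<open>\<bar>f\<bar> powr p \<le> \<bar>f\<bar>\<close> when \<open>\<bar>f\<bar> \<le> 1\<close>, and \<open>r\<close>, \<open>r'\<close>, \<open>r''\<close> are even or odd.

  For (c), let \<open>A\<close> be a linear combination of values of \<open>X\<close> before time 0 and \<open>B\<close> one of
  values after time \<open>t\<close>, with variances at most \<open>m\<close> and covariance \<open>c\<close>. The bounded
  variables \<open>cos (u A)\<close> and \<open>cos (u B)\<close> are past and future measurable, so their covariance
  is at most \<open>4 \<alpha>(t)\<close>; by the Gaussian characteristic function it equals
  \<open>exp (-s) (cosh (u\<^sup>2 c) - 1)\<close> with \<open>s \<le> 1\<close> for \<open>u = 1 / sqrt m\<close>. Hence \<open>c\<^sup>2 \<le> 16 e \<alpha>(t) m\<^sup>2\<close>.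
  Applied to \<open>X\<close> and its difference quotients this gives \<open>r, r', r'' = O(sqrt (\<alpha>(t/2))) = O(t powr (-\<mu>/2))\<close>,
  which is integrable at infinity as soon as \<open>\<mu> > 2\<close>.
\<close>

section \<open>Gaussian linear combinations of the process\<close>

lemma std_normal_integral_cos:
  "(\<integral>x. std_normal_density x * cos (s * x) \<partial>lborel) = exp (- s\<^sup>2 / 2)"
proof -
  interpret real_distribution std_normal_distribution by (rule real_dist_normal_dist)
  have "integrable std_normal_distribution (\<lambda>x. iexp (s * x))"
    by (rule integrable_iexp) auto
  then have "Re (char std_normal_distribution s) = (LINT x|std_normal_distribution. cos (s * x))"
    unfolding char_def by (simp add: integral_Re[symmetric] Re_exp)
  also have "\<dots> = (\<integral>x. std_normal_density x * cos (s * x) \<partial>lborel)"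
    by (subst integral_density) auto
  finally show ?thesis by (simp add: char_std_normal_distribution)
qed

lemma (in prob_space) centered_gaussian_rv_expectation_cos:
  assumes "centered_gaussian_rv M Y"
  shows "integrable M (\<lambda>\<omega>. (Y \<omega>)\<^sup>2)"
    and "expectation (\<lambda>\<omega>. cos (Y \<omega>)) = exp (- expectation (\<lambda>\<omega>. (Y \<omega>)\<^sup>2) / 2)"
proof -
  have [measurable]: "Y \<in> borel_measurable M"
    using assms unfolding centered_gaussian_rv_def by auto
  from assms consider "AE \<omega> in M. Y \<omega> = 0" | s where "s > 0" "distributed M lborel Y (normal_density 0 s)"
    unfolding centered_gaussian_rv_def by blast
  then have "integrable M (\<lambda>\<omega>. (Y \<omega>)\<^sup>2) \<and>
      expectation (\<lambda>\<omega>. cos (Y \<omega>)) = exp (- expectation (\<lambda>\<omega>. (Y \<omega>)\<^sup>2) / 2)"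
  proof cases
    case 1
    have "integrable M (\<lambda>\<omega>. (Y \<omega>)\<^sup>2) = integrable M (\<lambda>_. 0::real)"
      by (rule integrable_cong_AE) (use 1 in auto)
    moreover have "expectation (\<lambda>\<omega>. (Y \<omega>)\<^sup>2) = expectation (\<lambda>_. 0::real)"
      by (rule integral_cong_AE) (use 1 in auto)
    moreover have "expectation (\<lambda>\<omega>. cos (Y \<omega>)) = expectation (\<lambda>_. 1::real)"
      by (rule integral_cong_AE) (use 1 in auto)
    ultimately show ?thesis by (simp add: prob_space)
  next
    case 2
    have "integrable lborel (\<lambda>x. normal_density 0 s x * x\<^sup>2)"
      using integrable_normal_moment[where \<mu>=0 and \<sigma>=s and k=2] 2(1) by simp
    then have "integrable M (\<lambda>\<omega>. (Y \<omega>)\<^sup>2)"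
      by (subst distributed_integrable[OF 2(2), symmetric]) auto
    moreover have "expectation (\<lambda>\<omega>. (Y \<omega>)\<^sup>2) = s\<^sup>2"
      using normal_distributed_variance[OF 2] normal_distributed_expectation[OF 2] by simp
    moreover
    have "distributed M lborel (\<lambda>x. (Y x - 0) / s) std_normal_density"
      using normal_standard_normal_convert[OF 2(1)] 2(2) by simp
    then have "(\<integral>x. std_normal_density x * cos (s * x) \<partial>lborel) = expectation (\<lambda>x. cos (s * ((Y x - 0) / s)))"
      by (rule distributed_integral) auto
    then have "expectation (\<lambda>\<omega>. cos (Y \<omega>)) = exp (- s\<^sup>2 / 2)"
      using 2(1) by (simp add: std_normal_integral_cos)
    ultimately show ?thesis by simp
  qed
  then show "integrable M (\<lambda>\<omega>. (Y \<omega>)\<^sup>2)"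
    and "expectation (\<lambda>\<omega>. cos (Y \<omega>)) = exp (- expectation (\<lambda>\<omega>. (Y \<omega>)\<^sup>2) / 2)"
    by auto
qed

lemma integrable_mult_of_square_integrable:
  fixes A B :: "'a \<Rightarrow> real"
  assumes [measurable]: "A \<in> borel_measurable M" "B \<in> borel_measurable M"
    and "integrable M (\<lambda>x. (A x)\<^sup>2)" "integrable M (\<lambda>x. (B x)\<^sup>2)"
  shows "integrable M (\<lambda>x. A x * B x)"
proof (rule Bochner_Integration.integrable_bound)
  show "integrable M (\<lambda>x. (A x)\<^sup>2 + (B x)\<^sup>2)" using assms by simp
  have "\<bar>a * b\<bar> \<le> a\<^sup>2 + b\<^sup>2" for a b :: real
    using sum_squares_bound[of "\<bar>a\<bar>" "\<bar>b\<bar>"] mult_nonneg_nonneg[of "\<bar>a\<bar>" "\<bar>b\<bar>"]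
    by (simp only: abs_mult power2_abs) linarith
  then show "AE x in M. norm (A x * B x) \<le> norm ((A x)\<^sup>2 + (B x)\<^sup>2)"
    by (intro AE_I2) simp
qed simp

lemma integral_square_lincomb:
  fixes A B :: "'a \<Rightarrow> real"
  assumes "A \<in> borel_measurable M" "B \<in> borel_measurable M"
    and "integrable M (\<lambda>x. (A x)\<^sup>2)" "integrable M (\<lambda>x. (B x)\<^sup>2)"
  shows "(\<integral>x. (u * A x + v * B x)\<^sup>2 \<partial>M) =
    u\<^sup>2 * (\<integral>x. (A x)\<^sup>2 \<partial>M) + 2 * u * v * (\<integral>x. A x * B x \<partial>M) + v\<^sup>2 * (\<integral>x. (B x)\<^sup>2 \<partial>M)"
proof -
  have "(\<lambda>x. (u * A x + v * B x)\<^sup>2) = (\<lambda>x. u\<^sup>2 * (A x)\<^sup>2 + 2 * u * v * (A x * B x) + v\<^sup>2 * (B x)\<^sup>2)"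
    by (auto simp: power2_eq_square algebra_simps)
  then show ?thesis
    using assms integrable_mult_of_square_integrable[OF assms] by simp
qed

lemma square_le_of_nonneg_quadratic_form:
  fixes a b c :: real
  assumes Q: "\<And>u v. 0 \<le> u\<^sup>2 * a + 2 * u * v * c + v\<^sup>2 * b"
  shows "c\<^sup>2 \<le> a * b"
proof (cases "a = 0")
  case True
  have "c = 0"
  proof (rule ccontr)
    assume "c \<noteq> 0"
    have "0 \<le> 2 * (- (b + 1) / (2 * c)) * 1 * c + 1\<^sup>2 * b"
      using Q[of "- (b + 1) / (2 * c)" 1] True by simp
    also have "\<dots> = -1" using \<open>c \<noteq> 0\<close> by (simp add: field_simps)
    finally show False by simp
  qed
  then show ?thesis using True by simp
next
  case False
  then have "a > 0" using Q[of 1 0] by simp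
  have "0 \<le> (- c / a)\<^sup>2 * a + 2 * (- c / a) * 1 * c + 1\<^sup>2 * b" by (rule Q)
  also have "\<dots> = b - c\<^sup>2 / a" using \<open>a > 0\<close> by (simp add: field_simps power2_eq_square)
  finally show ?thesis using \<open>a > 0\<close> by (simp add: divide_le_eq mult.commute)
qed

lemma Cauchy_Schwarz_integral:
  fixes A B :: "'a \<Rightarrow> real"
  assumes "A \<in> borel_measurable M" "B \<in> borel_measurable M"
    and "integrable M (\<lambda>x. (A x)\<^sup>2)" "integrable M (\<lambda>x. (B x)\<^sup>2)"
  shows "(\<integral>x. A x * B x \<partial>M)\<^sup>2 \<le> (\<integral>x. (A x)\<^sup>2 \<partial>M) * (\<integral>x. (B x)\<^sup>2 \<partial>M)"
proof (rule square_le_of_nonneg_quadratic_form)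
  fix u v :: real
  have "0 \<le> (\<integral>x. (u * A x + v * B x)\<^sup>2 \<partial>M)" by (rule Bochner_Integration.integral_nonneg) simp
  then show "0 \<le> u\<^sup>2 * (\<integral>x. (A x)\<^sup>2 \<partial>M) + 2 * u * v * (\<integral>x. A x * B x \<partial>M) + v\<^sup>2 * (\<integral>x. (B x)\<^sup>2 \<partial>M)"
    by (simp only: integral_square_lincomb[OF assms])
qed

definition process_lincomb :: "(real \<Rightarrow> 'a \<Rightarrow> real) \<Rightarrow> real set \<Rightarrow> ('a \<Rightarrow> real) \<Rightarrow> bool" where
  "process_lincomb X I A \<longleftrightarrow> (\<exists>S p. finite S \<and> S \<subseteq> I \<and> A = (\<lambda>\<omega>. \<Sum>s\<in>S. p s * X s \<omega>))"

lemma process_lincomb_process: "s \<in> I \<Longrightarrow> process_lincomb X I (X s)"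
  unfolding process_lincomb_def by (intro exI[of _ "{s}"] exI[of _ "\<lambda>_. 1"]) auto

lemma process_lincomb_scale:
  assumes "process_lincomb X I A"
  shows "process_lincomb X I (\<lambda>\<omega>. u * A \<omega>)"
proof -
  obtain S p where "finite S" "S \<subseteq> I" "A = (\<lambda>\<omega>. \<Sum>s\<in>S. p s * X s \<omega>)"
    using assms unfolding process_lincomb_def by blast
  then show ?thesis unfolding process_lincomb_def
    by (intro exI[of _ S] exI[of _ "\<lambda>s. u * p s"]) (auto simp: sum_distrib_left mult.assoc)
qed

lemma process_lincomb_add:
  assumes "process_lincomb X I A" "process_lincomb X I B"
  shows "process_lincomb X I (\<lambda>\<omega>. A \<omega> + B \<omega>)"
proof -
  obtain S p where S: "finite S" "S \<subseteq> I" "A = (\<lambda>\<omega>. \<Sum>s\<in>S. p s * X s \<omega>)"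
    using assms(1) unfolding process_lincomb_def by blast
  obtain T q where T: "finite T" "T \<subseteq> I" "B = (\<lambda>\<omega>. \<Sum>s\<in>T. q s * X s \<omega>)"
    using assms(2) unfolding process_lincomb_def by blast
  have extend: "(\<Sum>s\<in>R. w s * X s \<omega>) = (\<Sum>s\<in>S \<union> T. (if s \<in> R then w s else 0) * X s \<omega>)"
    if "R \<subseteq> S \<union> T" for R w \<omega>
    by (rule sum.mono_neutral_cong_left) (use S(1) T(1) that in simp_all)
  define w where "w s = (if s \<in> S then p s else 0) + (if s \<in> T then q s else 0)" for s
  have "(\<lambda>\<omega>. A \<omega> + B \<omega>) = (\<lambda>\<omega>. \<Sum>s\<in>S \<union> T. w s * X s \<omega>)"
    unfolding w_def S(3) T(3) extend[of S p, OF Un_upper1] extend[of T q, OF Un_upper2]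
    by (simp add: distrib_right sum.distrib)
  then show ?thesis unfolding process_lincomb_def using S T by blast
qed

lemma process_lincomb_mono: "process_lincomb X I A \<Longrightarrow> I \<subseteq> J \<Longrightarrow> process_lincomb X J A"
  unfolding process_lincomb_def by blast

lemma centered_gaussian_rv_process_lincomb:
  "centered_gaussian_process M X \<Longrightarrow> process_lincomb X I A \<Longrightarrow> centered_gaussian_rv M A"
  unfolding process_lincomb_def centered_gaussian_process_def by blast

section \<open>The strong mixing coefficient\<close>

definition gen_sigma_measure :: "'a measure \<Rightarrow> (real \<Rightarrow> 'a \<Rightarrow> real) \<Rightarrow> real set \<Rightarrow> 'a measure" where
  "gen_sigma_measure M X I = sigma (space M) {X s -` B \<inter> space M | s B. s \<in> I \<and> B \<in> sets borel}"

lemma sets_gen_sigma_measure: "sets (gen_sigma_measure M X I) = gen_sigma M X I"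
  unfolding gen_sigma_measure_def gen_sigma_def by (subst sets_measure_of) auto

lemma space_gen_sigma_measure: "space (gen_sigma_measure M X I) = space M"
  unfolding gen_sigma_measure_def by (subst space_measure_of) auto

lemma process_lincomb_measurable_gen_sigma:
  assumes "process_lincomb X I A"
  shows "A \<in> borel_measurable (gen_sigma_measure M X I)"
proof -
  obtain S p where S: "finite S" "S \<subseteq> I" "A = (\<lambda>\<omega>. \<Sum>s\<in>S. p s * X s \<omega>)"
    using assms unfolding process_lincomb_def by blast
  have X: "X s \<in> borel_measurable (gen_sigma_measure M X I)" if "s \<in> I" for s
    by (rule measurableI) (use that in \<open>auto simp: space_gen_sigma_measure sets_gen_sigma_measure gen_sigma_def\<close>)
  have "(\<lambda>\<omega>. p s * X s \<omega>) \<in> borel_measurable (gen_sigma_measure M X I)" if "s \<in> S" for s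
    using that S(2) by (intro borel_measurable_times borel_measurable_const X) blast
  then show ?thesis unfolding S(3) by (rule borel_measurable_sum)
qed

lemma gen_sigma_subset_sets:
  assumes "\<And>s. X s \<in> borel_measurable M"
  shows "gen_sigma M X I \<subseteq> sets M"
  unfolding gen_sigma_def using assms by (intro sets.sigma_sets_subset) (auto simp: measurable_sets)

lemma subalgebra_gen_sigma_measure:
  assumes "\<And>s. X s \<in> borel_measurable M"
  shows "subalgebra M (gen_sigma_measure M X I)"
  unfolding subalgebra_def using gen_sigma_subset_sets[OF assms]
  by (simp add: sets_gen_sigma_measure space_gen_sigma_measure)

lemma gen_sigma_mono: "I \<subseteq> J \<Longrightarrow> gen_sigma M X I \<subseteq> gen_sigma M X J"
  unfolding gen_sigma_def by (rule sigma_sets_mono') blast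

lemma abs_mult_diff_le:
  fixes a a' b b' e :: real
  assumes "\<bar>a - a'\<bar> \<le> e" "\<bar>b - b'\<bar> \<le> e" "\<bar>b\<bar> \<le> 1" "\<bar>a'\<bar> \<le> 1"
  shows "\<bar>a * b - a' * b'\<bar> \<le> 2 * e"
proof -
  have "\<bar>(a - a') * b\<bar> \<le> e"
    using assms(1,3) mult_mono[of "\<bar>a - a'\<bar>" e "\<bar>b\<bar>" 1] by (simp add: abs_mult)
  moreover have "\<bar>a' * (b - b')\<bar> \<le> e"
    using assms(2,4) mult_mono[of "\<bar>a'\<bar>" 1 "\<bar>b - b'\<bar>" e] by (simp add: abs_mult)
  moreover have "a * b - a' * b' = (a - a') * b + a' * (b - b')" by algebra
  ultimately show ?thesis by linarith
qed

lemma staircase_approx: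
  fixes y :: real and n :: nat
  assumes "0 \<le> y" "y \<le> 1" "n > 0"
  shows "\<bar>y - (\<Sum>k\<in>{1..n}. indicator {real k / real n..} y) / real n\<bar> \<le> 1 / real n"
proof -
  define m where "m = nat \<lfloor>real n * y\<rfloor>"
  have floor_m: "real m \<le> real n * y" "real n * y < real m + 1"
    using assms by (auto simp: m_def)
  have "m \<le> n" using floor_m assms mult_left_le[of y "real n"] by linarith
  have "real k / real n \<le> y \<longleftrightarrow> k \<le> m" for k
    using assms(3) floor_m by (auto simp: divide_le_eq mult.commute)
  then have "{1..n} \<inter> {k. real k / real n \<le> y} = {1..m}" using \<open>m \<le> n\<close> by (intro set_eqI) (simp, linarith)
  then have "(\<Sum>k\<in>{1..n}. indicator {real k / real n..} y) = (real m :: real)"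
    by (simp add: indicator_def sum.If_cases)
  moreover have "real m / real n \<le> y" "y < (real m + 1) / real n"
    using floor_m assms(3) by (simp_all add: divide_le_eq less_divide_eq mult.commute)
  ultimately show ?thesis by (simp add: add_divide_distrib abs_le_iff)
qed

lemma abs_sum_indicator_div_le_1:
  "\<bar>(\<Sum>k\<in>{1..n}. indicator (A k) x) / real n\<bar> \<le> (1::real)"
proof (cases "n = 0")
  case False
  have "(\<Sum>k\<in>{1..n}. indicator (A k) x) \<le> of_nat (card {1..n}) * (1::real)"
    by (rule sum_bounded_above) (simp add: indicator_def)
  moreover have "0 \<le> (\<Sum>k\<in>{1..n}. indicator (A k) x :: real)" by (simp add: sum_nonneg)
  ultimately show ?thesis using False by (simp add: divide_le_eq)
qed simp

lemma cosh_minus_one_ge: "x\<^sup>2 / 4 \<le> cosh x - 1" for x :: real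
proof -
  have "y\<^sup>2 / 4 \<le> cosh y - 1" if "y \<ge> 0" for y :: real
  proof -
    have "1 + y + y\<^sup>2 / 2 \<le> exp y" by (rule exp_lower_Taylor_quadratic) fact
    moreover have "1 - y \<le> exp (- y)" using exp_ge_add_one_self[of "- y"] by simp
    ultimately show ?thesis unfolding cosh_field_def by (simp add: field_simps)
  qed
  from this[of "\<bar>x\<bar>"] show ?thesis by simp
qed

context prob_space
begin

lemma alpha_coeff_bdd_above:
  "bdd_above {\<bar>prob U * prob V - prob (U \<inter> V)\<bar> | U V.
      U \<in> gen_sigma M X {..0} \<and> V \<in> gen_sigma M X {t..}}"
proof -
  have "\<bar>prob U * prob V - prob (U \<inter> V)\<bar> \<le> 1" for U V
  proof -
    have "0 \<le> prob U * prob V" "prob U * prob V \<le> 1" by (auto intro: mult_le_one)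
    then show ?thesis
      using prob_le_1[of "U \<inter> V"] measure_nonneg[of M "U \<inter> V"] unfolding abs_le_iff by linarith
  qed
  then show ?thesis unfolding bdd_above_def by blast
qed

lemma abs_prob_diff_le_alpha_coeff:
  assumes "U \<in> gen_sigma M X {..0}" "V \<in> gen_sigma M X {t..}"
  shows "\<bar>prob (U \<inter> V) - prob U * prob V\<bar> \<le> alpha_coeff M X t"
  unfolding alpha_coeff_def abs_minus_commute[of "prob (U \<inter> V)"]
  by (rule cSup_upper[OF _ alpha_coeff_bdd_above]) (use assms in blast)

lemma empty_in_gen_sigma: "{} \<in> gen_sigma M X I"
  unfolding gen_sigma_def by (rule sigma_sets.Empty)

lemma alpha_coeff_nonneg: "0 \<le> alpha_coeff M X t"
  using abs_prob_diff_le_alpha_coeff[OF empty_in_gen_sigma empty_in_gen_sigma] by simp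

lemma alpha_coeff_antimono:
  assumes "s \<le> t"
  shows "alpha_coeff M X t \<le> alpha_coeff M X s"
  unfolding alpha_coeff_def
proof (rule cSup_subset_mono[OF _ alpha_coeff_bdd_above])
  show "{\<bar>prob U * prob V - prob (U \<inter> V)\<bar> | U V. U \<in> gen_sigma M X {..0} \<and> V \<in> gen_sigma M X {t..}} \<noteq> {}"
    using empty_in_gen_sigma by blast
  show "{\<bar>prob U * prob V - prob (U \<inter> V)\<bar> | U V. U \<in> gen_sigma M X {..0} \<and> V \<in> gen_sigma M X {t..}}
     \<subseteq> {\<bar>prob U * prob V - prob (U \<inter> V)\<bar> | U V. U \<in> gen_sigma M X {..0} \<and> V \<in> gen_sigma M X {s..}}"
    using gen_sigma_mono[of "{t..}" "{s..}" M X] assms by auto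
qed

lemma abs_expectation_le:
  fixes h :: "'a \<Rightarrow> real"
  assumes "integrable M h" "\<And>\<omega>. \<omega> \<in> space M \<Longrightarrow> \<bar>h \<omega>\<bar> \<le> c"
  shows "\<bar>expectation h\<bar> \<le> c"
proof -
  have "\<bar>expectation h\<bar> \<le> expectation (\<lambda>\<omega>. \<bar>h \<omega>\<bar>)"
    using integral_norm_bound[of M h] by simp
  also have "\<dots> \<le> expectation (\<lambda>_. c)"
    by (rule integral_mono) (use assms in auto)
  finally show ?thesis by (simp add: prob_space)
qed

lemma abs_covariance_perturbation_le:
  fixes f g f' g' :: "'a \<Rightarrow> real"
  assumes [measurable]: "f \<in> borel_measurable M" "g \<in> borel_measurable M"
      "f' \<in> borel_measurable M" "g' \<in> borel_measurable M"
    and bounded: "\<And>\<omega>. \<omega> \<in> space M \<Longrightarrow> \<bar>f \<omega>\<bar> \<le> 1 \<and> \<bar>g \<omega>\<bar> \<le> 1 \<and> \<bar>f' \<omega>\<bar> \<le> 1 \<and> \<bar>g' \<omega>\<bar> \<le> 1"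
    and close: "\<And>\<omega>. \<omega> \<in> space M \<Longrightarrow> \<bar>f \<omega> - f' \<omega>\<bar> \<le> e \<and> \<bar>g \<omega> - g' \<omega>\<bar> \<le> e"
  shows "\<bar>(expectation (\<lambda>\<omega>. f \<omega> * g \<omega>) - expectation f * expectation g)
      - (expectation (\<lambda>\<omega>. f' \<omega> * g' \<omega>) - expectation f' * expectation g')\<bar> \<le> 4 * e"
proof -
  have bounded_integrable: "integrable M h"
    if "h \<in> borel_measurable M" "\<And>\<omega>. \<omega> \<in> space M \<Longrightarrow> \<bar>h \<omega>\<bar> \<le> 1" for h :: "'a \<Rightarrow> real"
    by (rule integrable_const_bound[where B=1]) (use that in auto)
  have bounded_mult: "\<bar>a * b\<bar> \<le> 1" if "\<bar>a\<bar> \<le> 1" "\<bar>b\<bar> \<le> 1" for a b :: real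
    using that by (simp add: abs_mult mult_le_one)
  have [simp]: "integrable M f" "integrable M g" "integrable M f'" "integrable M g'"
    "integrable M (\<lambda>\<omega>. f \<omega> * g \<omega>)" "integrable M (\<lambda>\<omega>. f' \<omega> * g' \<omega>)"
    using bounded by (auto intro!: bounded_integrable bounded_mult)
  have "\<bar>expectation (\<lambda>\<omega>. f \<omega> * g \<omega> - f' \<omega> * g' \<omega>)\<bar> \<le> 2 * e"
    using bounded close by (intro abs_expectation_le abs_mult_diff_le) auto
  moreover have "\<bar>expectation f * expectation g - expectation f' * expectation g'\<bar> \<le> 2 * e"
  proof (rule abs_mult_diff_le)
    show "\<bar>expectation f - expectation f'\<bar> \<le> e" "\<bar>expectation g - expectation g'\<bar> \<le> e"
      using close by (auto intro!: abs_expectation_le simp flip: Bochner_Integration.integral_diff)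
    show "\<bar>expectation g\<bar> \<le> 1" "\<bar>expectation f'\<bar> \<le> 1"
      using bounded by (auto intro!: abs_expectation_le)
  qed
  ultimately show ?thesis by simp
qed

lemma abs_covariance_staircase_le_alpha_coeff:
  fixes n :: nat
  assumes "n > 0" and Xm: "\<And>s. X s \<in> borel_measurable M"
    and U: "\<And>k. U k \<in> gen_sigma M X {..0}" and V: "\<And>l. V l \<in> gen_sigma M X {t..}"
  defines "f \<equiv> \<lambda>\<omega>. (\<Sum>k\<in>{1..n}. indicator (U k) \<omega>) / real n :: real"
    and "g \<equiv> \<lambda>\<omega>. (\<Sum>l\<in>{1..n}. indicator (V l) \<omega>) / real n :: real"
  shows "\<bar>expectation (\<lambda>\<omega>. f \<omega> * g \<omega>) - expectation f * expectation g\<bar> \<le> alpha_coeff M X t"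
proof -
  have [measurable]: "U k \<in> sets M" "V k \<in> sets M" for k
    using U V gen_sigma_subset_sets[of X M, OF Xm] by blast+
  have [simp]: "integrable M (indicator A :: _ \<Rightarrow> real)" if "A \<in> sets M" for A
    using that by (simp add: integrable_indicator_iff sets.Int_space_eq2 less_top[symmetric])
  have "expectation f = (\<Sum>k\<in>{1..n}. prob (U k)) / real n"
    unfolding f_def by (simp add: Bochner_Integration.integral_sum)
  moreover have "expectation g = (\<Sum>l\<in>{1..n}. prob (V l)) / real n"
    unfolding g_def by (simp add: Bochner_Integration.integral_sum)
  moreover have "expectation (\<lambda>\<omega>. f \<omega> * g \<omega>)
      = (\<Sum>k\<in>{1..n}. \<Sum>l\<in>{1..n}. prob (U k \<inter> V l)) / (real n * real n)"
    unfolding f_def g_def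
    by (simp add: sum_product indicator_inter_arith[symmetric] Bochner_Integration.integral_sum)
  ultimately have "expectation (\<lambda>\<omega>. f \<omega> * g \<omega>) - expectation f * expectation g
      = (\<Sum>k\<in>{1..n}. \<Sum>l\<in>{1..n}. prob (U k \<inter> V l) - prob (U k) * prob (V l)) / (real n * real n)"
    by (simp add: sum_product sum_subtractf diff_divide_distrib)
  moreover have "\<bar>\<Sum>k\<in>{1..n}. \<Sum>l\<in>{1..n}. prob (U k \<inter> V l) - prob (U k) * prob (V l)\<bar>
      \<le> (\<Sum>k\<in>{1..n}. \<Sum>l\<in>{1..n}. alpha_coeff M X t)"
    by (rule order_trans[OF sum_abs sum_mono], rule order_trans[OF sum_abs sum_mono],
        rule abs_prob_diff_le_alpha_coeff[OF U V])
  ultimately show ?thesis using \<open>n > 0\<close> by (simp add: abs_divide divide_le_eq ac_simps)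
qed

lemma abs_covariance_le_alpha_coeff:
  fixes f g :: "'a \<Rightarrow> real"
  assumes Xm: "\<And>s. X s \<in> borel_measurable M"
    and f: "f \<in> borel_measurable (gen_sigma_measure M X {..0})"
    and g: "g \<in> borel_measurable (gen_sigma_measure M X {t..})"
    and range: "\<And>\<omega>. \<omega> \<in> space M \<Longrightarrow> f \<omega> \<in> {0..1} \<and> g \<omega> \<in> {0..1}"
  shows "\<bar>expectation (\<lambda>\<omega>. f \<omega> * g \<omega>) - expectation f * expectation g\<bar> \<le> alpha_coeff M X t"
proof (rule field_le_epsilon)
  fix e :: real
  assume "0 < e"
  \<comment> \<open>approximate \<open>f\<close> and \<open>g\<close> uniformly by averages of indicators of their level sets,
    which lie in the past and the future \<open>\<sigma>\<close>-algebra respectively\<close>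
  then obtain n :: nat where "n > 0" "inverse (real n) < e / 4"
    using ex_inverse_of_nat_less[of "e / 4"] by auto
  define U where "U k = f -` {real k / real n..} \<inter> space M" for k :: nat
  define V where "V k = g -` {real k / real n..} \<inter> space M" for k :: nat
  define fn where "fn \<omega> = (\<Sum>k\<in>{1..n}. indicator (U k) \<omega>) / (real n :: real)" for \<omega>
  define gn where "gn \<omega> = (\<Sum>k\<in>{1..n}. indicator (V k) \<omega>) / (real n :: real)" for \<omega>
  have U: "U k \<in> gen_sigma M X {..0}" for k
    using measurable_sets[OF f, of "{real k / real n..}"]
    unfolding U_def sets_gen_sigma_measure space_gen_sigma_measure by simp
  have V: "V k \<in> gen_sigma M X {t..}" for k
    using measurable_sets[OF g, of "{real k / real n..}"]
    unfolding V_def sets_gen_sigma_measure space_gen_sigma_measure by simp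
  have [measurable]: "f \<in> borel_measurable M" "g \<in> borel_measurable M"
    using measurable_from_subalg[OF subalgebra_gen_sigma_measure[of X M, OF Xm]] f g by blast+
  have [measurable]: "U k \<in> sets M" "V k \<in> sets M" for k
    using U V gen_sigma_subset_sets[of X M, OF Xm] by (blast, blast)
  have "\<bar>f \<omega> - fn \<omega>\<bar> \<le> 1 / real n \<and> \<bar>g \<omega> - gn \<omega>\<bar> \<le> 1 / real n" if "\<omega> \<in> space M" for \<omega>
    using staircase_approx[of "f \<omega>" n] staircase_approx[of "g \<omega>" n] range[OF that] \<open>n > 0\<close> that
    by (simp add: fn_def gn_def U_def V_def indicator_def)
  then have "\<bar>(expectation (\<lambda>\<omega>. f \<omega> * g \<omega>) - expectation f * expectation g)
      - (expectation (\<lambda>\<omega>. fn \<omega> * gn \<omega>) - expectation fn * expectation gn)\<bar> \<le> 4 * (1 / real n)"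
    by (intro abs_covariance_perturbation_le)
      (use range abs_sum_indicator_div_le_1 in \<open>auto simp: fn_def gn_def\<close>)
  moreover have "\<bar>expectation (\<lambda>\<omega>. fn \<omega> * gn \<omega>) - expectation fn * expectation gn\<bar> \<le> alpha_coeff M X t"
    unfolding fn_def gn_def by (rule abs_covariance_staircase_le_alpha_coeff[OF \<open>n > 0\<close> Xm U V])
  moreover have "4 * (1 / real n) < e"
    using \<open>inverse (real n) < e / 4\<close> by (simp add: inverse_eq_divide)
  ultimately show "\<bar>expectation (\<lambda>\<omega>. f \<omega> * g \<omega>) - expectation f * expectation g\<bar> \<le> alpha_coeff M X t + e"
    by linarith
qed


lemma abs_covariance_cos_le_alpha_coeff:
  fixes A B :: "'a \<Rightarrow> real"
  assumes Xm: "\<And>s. X s \<in> borel_measurable M"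
    and A: "A \<in> borel_measurable (gen_sigma_measure M X {..0})"
    and B: "B \<in> borel_measurable (gen_sigma_measure M X {t..})"
  shows "\<bar>expectation (\<lambda>\<omega>. cos (A \<omega>) * cos (B \<omega>))
      - expectation (\<lambda>\<omega>. cos (A \<omega>)) * expectation (\<lambda>\<omega>. cos (B \<omega>))\<bar> \<le> 4 * alpha_coeff M X t"
proof -
  have [measurable]: "A \<in> borel_measurable M" "B \<in> borel_measurable M"
    using measurable_from_subalg[OF subalgebra_gen_sigma_measure[of X M, OF Xm]] A B by blast+
  have [simp]: "integrable M (\<lambda>\<omega>. cos (A \<omega>))" "integrable M (\<lambda>\<omega>. cos (B \<omega>))"
    "integrable M (\<lambda>\<omega>. cos (A \<omega>) * cos (B \<omega>))"
    by (rule integrable_const_bound[where B=1]; simp add: abs_mult mult_le_one)+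
  define f where "f \<omega> = (1 + cos (A \<omega>)) / 2" for \<omega>
  define g where "g \<omega> = (1 + cos (B \<omega>)) / 2" for \<omega>
  have "\<bar>expectation (\<lambda>\<omega>. f \<omega> * g \<omega>) - expectation f * expectation g\<bar> \<le> alpha_coeff M X t"
  proof (rule abs_covariance_le_alpha_coeff[OF Xm])
    show "f \<in> borel_measurable (gen_sigma_measure M X {..0})" unfolding f_def using A by measurable
    show "g \<in> borel_measurable (gen_sigma_measure M X {t..})" unfolding g_def using B by measurable
    have "0 \<le> 1 + cos x \<and> 1 + cos x \<le> 2" for x :: real
      using cos_ge_minus_one[of x] cos_le_one[of x] by linarith
    then show "f \<omega> \<in> {0..1} \<and> g \<omega> \<in> {0..1}" for \<omega>
      by (simp add: f_def g_def)
  qed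
  moreover have "(\<lambda>\<omega>. f \<omega> * g \<omega>) = (\<lambda>\<omega>. (1 + cos (A \<omega>) + cos (B \<omega>) + cos (A \<omega>) * cos (B \<omega>)) / 4)"
    unfolding f_def g_def by (auto simp: field_simps)
  ultimately show ?thesis
    unfolding f_def g_def by (simp add: prob_space field_simps)
qed

lemma process_lincomb_square_integrable:
  assumes "centered_gaussian_process M X" "process_lincomb X I A"
  shows "A \<in> borel_measurable M" "integrable M (\<lambda>\<omega>. (A \<omega>)\<^sup>2)"
  using centered_gaussian_rv_process_lincomb[OF assms]
    centered_gaussian_rv_expectation_cos(1)[OF centered_gaussian_rv_process_lincomb[OF assms]]
  unfolding centered_gaussian_rv_def by auto

lemma covariance_cos_process_lincomb_eq:
  assumes gp: "centered_gaussian_process M X"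
    and A: "process_lincomb X I A" and B: "process_lincomb X J B"
  shows "expectation (\<lambda>\<omega>. cos (u * A \<omega>) * cos (u * B \<omega>))
      - expectation (\<lambda>\<omega>. cos (u * A \<omega>)) * expectation (\<lambda>\<omega>. cos (u * B \<omega>))
    = exp (- u\<^sup>2 * (expectation (\<lambda>\<omega>. (A \<omega>)\<^sup>2) + expectation (\<lambda>\<omega>. (B \<omega>)\<^sup>2)) / 2)
      * (cosh (u\<^sup>2 * expectation (\<lambda>\<omega>. A \<omega> * B \<omega>)) - 1)"
proof -
  define a where "a = expectation (\<lambda>\<omega>. (A \<omega>)\<^sup>2)"
  define b where "b = expectation (\<lambda>\<omega>. (B \<omega>)\<^sup>2)"
  define c where "c = expectation (\<lambda>\<omega>. A \<omega> * B \<omega>)"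
  have A': "process_lincomb X (I \<union> J) A" and B': "process_lincomb X (I \<union> J) B"
    using A B by (auto intro: process_lincomb_mono)
  note sq = process_lincomb_square_integrable[OF gp A'] process_lincomb_square_integrable[OF gp B']
  have cos_lincomb: "expectation (\<lambda>\<omega>. cos (v * A \<omega> + w * B \<omega>)) = exp (- (v\<^sup>2 * a + 2 * v * w * c + w\<^sup>2 * b) / 2)"
    for v w
  proof -
    have "process_lincomb X (I \<union> J) (\<lambda>\<omega>. v * A \<omega> + w * B \<omega>)"
      by (intro process_lincomb_add process_lincomb_scale A' B')
    from centered_gaussian_rv_expectation_cos(2)[OF centered_gaussian_rv_process_lincomb[OF gp this]]
    show ?thesis unfolding a_def b_def c_def integral_square_lincomb[OF sq(1,3,2,4)] .
  qed
  have [measurable]: "A \<in> borel_measurable M" "B \<in> borel_measurable M" using sq by simp_all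
  have prod_eq: "(\<lambda>\<omega>. cos (u * A \<omega>) * cos (u * B \<omega>))
      = (\<lambda>\<omega>. (cos (u * A \<omega> + u * B \<omega>) + cos (u * A \<omega> + (- u) * B \<omega>)) / 2)"
    by (auto simp: cos_add cos_diff)
  have "integrable M (\<lambda>\<omega>. cos (u * A \<omega> + v * B \<omega>))" for v
    by (rule integrable_const_bound[where B=1]) auto
  then have "expectation (\<lambda>\<omega>. cos (u * A \<omega>) * cos (u * B \<omega>))
      = (expectation (\<lambda>\<omega>. cos (u * A \<omega> + u * B \<omega>))
        + expectation (\<lambda>\<omega>. cos (u * A \<omega> + (- u) * B \<omega>))) / 2"
    unfolding prod_eq by (simp only: integral_divide_zero Bochner_Integration.integral_add)
  also have "\<dots> = (exp (- (u\<^sup>2 * a + u\<^sup>2 * b) / 2 - u\<^sup>2 * c) + exp (- (u\<^sup>2 * a + u\<^sup>2 * b) / 2 + u\<^sup>2 * c)) / 2"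
    unfolding cos_lincomb by (simp add: field_simps power2_eq_square)
  also have "\<dots> = exp (- (u\<^sup>2 * a + u\<^sup>2 * b) / 2) * cosh (u\<^sup>2 * c)"
    unfolding cosh_field_def by (simp add: field_simps flip: exp_add)
  finally show ?thesis
    using cos_lincomb[of u 0] cos_lincomb[of 0 u]
    by (simp add: a_def b_def c_def field_simps flip: exp_add)
qed


lemma square_expectation_mult_le_alpha_coeff:
  assumes gp: "centered_gaussian_process M X"
    and A: "process_lincomb X {..0} A" and B: "process_lincomb X {t..} B"
  shows "(expectation (\<lambda>\<omega>. A \<omega> * B \<omega>))\<^sup>2 \<le> 16 * exp 1 * alpha_coeff M X t *
    (max (expectation (\<lambda>\<omega>. (A \<omega>)\<^sup>2)) (expectation (\<lambda>\<omega>. (B \<omega>)\<^sup>2)))\<^sup>2"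
proof -
  define a where "a = expectation (\<lambda>\<omega>. (A \<omega>)\<^sup>2)"
  define b where "b = expectation (\<lambda>\<omega>. (B \<omega>)\<^sup>2)"
  define c where "c = expectation (\<lambda>\<omega>. A \<omega> * B \<omega>)"
  define m where "m = max a b"
  note sq = process_lincomb_square_integrable[OF gp A] process_lincomb_square_integrable[OF gp B]
  have "0 \<le> a" "0 \<le> b" unfolding a_def b_def by (rule Bochner_Integration.integral_nonneg, simp)+
  have "c\<^sup>2 \<le> 16 * exp 1 * alpha_coeff M X t * m\<^sup>2"
  proof (cases "m = 0")
    case True
    then have "a = 0" "b = 0" using \<open>0 \<le> a\<close> \<open>0 \<le> b\<close> unfolding m_def by linarith+
    then have "c = 0" using Cauchy_Schwarz_integral[OF sq(1,3,2,4)] unfolding a_def b_def c_def by simp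
    then show ?thesis using alpha_coeff_nonneg[of X t] by simp
  next
    case False
    then have "m > 0" using \<open>0 \<le> a\<close> unfolding m_def by linarith
    \<comment> \<open>after scaling by \<open>u\<close> both variances are at most 1, so the Gaussian factor is \<open>\<ge> exp (-1)\<close>\<close>
    define u where "u = 1 / sqrt m"
    have u2: "u\<^sup>2 = 1 / m" unfolding u_def using \<open>m > 0\<close> by (simp add: power_divide)
    have Xm: "\<And>s. X s \<in> borel_measurable M" using gp unfolding centered_gaussian_process_def by auto
    have "\<bar>exp (- u\<^sup>2 * (a + b) / 2) * (cosh (u\<^sup>2 * c) - 1)\<bar> \<le> 4 * alpha_coeff M X t"
      unfolding a_def b_def c_def covariance_cos_process_lincomb_eq[OF gp A B, symmetric]
      by (intro abs_covariance_cos_le_alpha_coeff Xm process_lincomb_measurable_gen_sigma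
          process_lincomb_scale A B)
    moreover have "exp (- 1) * ((u\<^sup>2 * c)\<^sup>2 / 4) \<le> exp (- u\<^sup>2 * (a + b) / 2) * (cosh (u\<^sup>2 * c) - 1)"
    proof (intro mult_mono cosh_minus_one_ge)
      have "u\<^sup>2 * (a + b) \<le> 2" using \<open>m > 0\<close> unfolding u2 m_def by (simp add: field_simps)
      then show "exp (- 1) \<le> exp (- u\<^sup>2 * (a + b) / 2)" by simp
    qed simp_all
    ultimately have "exp (- 1) * ((u\<^sup>2 * c)\<^sup>2 / 4) \<le> 4 * alpha_coeff M X t"
      by linarith
    then have "(u\<^sup>2 * c)\<^sup>2 \<le> 16 * exp 1 * alpha_coeff M X t"
      by (simp add: exp_minus field_simps)
    then show ?thesis using \<open>m > 0\<close> unfolding u2 by (simp add: power_divide divide_le_eq)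
  qed
  then show ?thesis unfolding a_def b_def c_def m_def .
qed

end

section \<open>Real analysis\<close>

lemma second_symmetric_difference_tendsto:
  fixes f f' :: "real \<Rightarrow> real"
  assumes f': "\<And>x. (f has_real_derivative f' x) (at x)"
    and f'': "(f' has_real_derivative f'' t) (at t)"
  shows "((\<lambda>h. (f (t + h) + f (t - h) - 2 * f t) / h\<^sup>2) \<longlongrightarrow> f'' t) (at 0)"
proof (rule lhopital)
  have "isCont f x" for x using f'[of x] by (rule DERIV_isCont)
  then have "((\<lambda>h. f (t + h) + f (t - h) - 2 * f t) \<longlongrightarrow> f (t + 0) + f (t - 0) - 2 * f t) (at 0)"
    by (intro tendsto_intros isCont_tendsto_compose[where g=f])
  then show "((\<lambda>h. f (t + h) + f (t - h) - 2 * f t) \<longlongrightarrow> 0) (at 0)" by simp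
  show "((\<lambda>h. h\<^sup>2) \<longlongrightarrow> 0) (at (0::real))"
    by (rule tendsto_eq_intros) (auto intro: tendsto_ident_at)
  show "\<forall>\<^sub>F h in at 0. h\<^sup>2 \<noteq> (0::real)" "\<forall>\<^sub>F h in at 0. 2 * h \<noteq> (0::real)"
    by (auto simp: eventually_at_filter)
  show "\<forall>\<^sub>F h in at 0. ((\<lambda>h. h\<^sup>2) has_real_derivative 2 * h) (at h)"
    by (intro always_eventually allI) (auto intro!: derivative_eq_intros)
  show "\<forall>\<^sub>F h in at 0. ((\<lambda>h. f (t + h) + f (t - h) - 2 * f t) has_real_derivative f' (t + h) - f' (t - h)) (at h)"
  proof (intro always_eventually allI)
    fix h :: real
    have "((\<lambda>h. f (t + h)) has_real_derivative f' (t + h)) (at h)"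
      using DERIV_shift[of f "f' (t + h)" h t] f'[of "t + h"] by (simp add: add.commute)
    moreover have "((\<lambda>h. f (t - h)) has_real_derivative - f' (t - h)) (at h)"
      using DERIV_mirror[where f="\<lambda>y. f (t + y)" and x=h] DERIV_shift[of f "f' (t - h)" "- h" t] f'[of "t - h"]
      by (simp add: add.commute)
    ultimately show "((\<lambda>h. f (t + h) + f (t - h) - 2 * f t) has_real_derivative f' (t + h) - f' (t - h)) (at h)"
      using DERIV_diff[OF DERIV_add DERIV_const[of "2 * f t"]] by fastforce
  qed
  have D1: "((\<lambda>h. f' (t + h)) has_real_derivative f'' t) (at 0)"
    using DERIV_shift[of f' "f'' t" 0 t] f'' by (simp add: add.commute)
  have "((\<lambda>h. f' (t - h)) has_real_derivative - f'' t) (at 0)"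
    using DERIV_mirror[where f="\<lambda>h. f' (t + h)" and x=0 and y="f'' t"] D1 by simp
  from DERIV_diff[OF D1 this]
  have "((\<lambda>h. (f' (t + h) - f' (t - h)) / h) \<longlongrightarrow> 2 * f'' t) (at 0)"
    unfolding DERIV_def by simp
  then have "((\<lambda>h. (f' (t + h) - f' (t - h)) / h / 2) \<longlongrightarrow> 2 * f'' t / 2) (at 0)"
    by (intro tendsto_divide tendsto_const) simp_all
  then show "((\<lambda>h. (f' (t + h) - f' (t - h)) / (2 * h)) \<longlongrightarrow> f'' t) (at 0)"
    by (simp add: mult.commute)
qed

lemma borel_measurable_derivative:
  fixes f f' :: "real \<Rightarrow> real"
  assumes f': "\<And>x. (f has_real_derivative f' x) (at x)" and [measurable]: "f \<in> borel_measurable borel"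
  shows "f' \<in> borel_measurable borel"
proof (rule borel_measurable_LIMSEQ_real)
  fix x :: real
  have "filterlim (\<lambda>i. 1 / real (Suc i)) (at_right 0) sequentially"
    using LIMSEQ_inverse_real_of_nat
    by (intro tendsto_imp_filterlim_at_right) (simp_all add: inverse_eq_divide)
  then have "filterlim (\<lambda>i. 1 / real (Suc i)) (at 0) sequentially"
    by (rule filterlim_mono) (simp_all add: at_le)
  with f'[of x] show "(\<lambda>i. (f (x + 1 / real (Suc i)) - f x) / (1 / real (Suc i))) \<longlonglongrightarrow> f' x"
    unfolding DERIV_def by (rule filterlim_compose)
qed measurable

lemma integrable_of_set_integrable_nonneg_even:
  fixes h :: "real \<Rightarrow> real"
  assumes [measurable]: "h \<in> borel_measurable borel"
    and even: "\<And>t. h (- t) = h t" and nonneg: "\<And>t. 0 \<le> h t"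
    and "set_integrable lborel {0..} h"
  shows "integrable lborel h"
proof (rule Bochner_Integration.integrable_bound)
  have right: "integrable lborel (\<lambda>x. indicator {0..} x * h x)"
    using assms(4) unfolding set_integrable_def by simp
  then have "integrable lborel (\<lambda>x. indicator {0..} (- x) * h (- x))"
    using lborel_integrable_real_affine_iff[where c="-1" and t=0 and f="\<lambda>x. indicator {0..} x * h x"]
    by simp
  with right show "integrable lborel (\<lambda>x. indicator {0..} x * h x + indicator {0..} (- x) * h (- x))"
    by simp
  show "AE x in lborel. norm (h x) \<le> norm (indicator {0..} x * h x + indicator {0..} (- x) * h (- x))"
    using nonneg even by (intro AE_I2) (auto simp: indicator_def)
qed simp

lemma integrable_indicator_powr_ray:
  fixes a e :: real
  assumes "a > 0" "e < -1"
  shows "integrable lborel (\<lambda>x. indicator {a..} x * x powr e)"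
proof -
  have "(\<lambda>x. x powr e) integrable_on {a..}"
    using has_integral_powr_to_inf[OF assms(2,1)] unfolding integrable_on_def by blast
  then have "(\<lambda>x. x powr e) absolutely_integrable_on {a..}"
    by (rule nonnegative_absolutely_integrable_1) simp
  then have "integrable lebesgue (\<lambda>x. indicator {a..} x *\<^sub>R x powr e)"
    unfolding set_integrable_def .
  then show ?thesis
    by (subst (asm) integrable_completion) (auto intro!: borel_measurable_times borel_measurable_indicator)
qed

lemma integrable_abs_powr_of_dominated:
  fixes f g :: "real \<Rightarrow> real"
  assumes "f \<in> borel_measurable borel" "integrable lborel g"
    and "\<And>t. \<bar>f t\<bar> \<le> 1" "\<And>t. \<bar>f t\<bar> \<le> g t" "p \<ge> 1"
  shows "integrable lborel (\<lambda>t. \<bar>f t\<bar> powr p)"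
proof (rule Bochner_Integration.integrable_bound[OF assms(2)])
  show "(\<lambda>t. \<bar>f t\<bar> powr p) \<in> borel_measurable lborel"
    using assms(1) by (intro measurable_abs_powr) simp
  have "\<bar>f t\<bar> powr p \<le> \<bar>f t\<bar>" for t
    using assms(3,5) by (cases "f t = 0") (auto intro: powr_le_one_le)
  then show "AE t in lborel. norm (\<bar>f t\<bar> powr p) \<le> norm (g t)"
    using assms(4) by (intro AE_I2) (smt (verit) powr_ge_zero real_norm_def)
qed

lemma set_integrable_ray_of_eventually_le_powr:
  fixes f :: "real \<Rightarrow> real"
  assumes [measurable]: "f \<in> borel_measurable borel"
    and bounded: "\<And>t. \<bar>f t\<bar> \<le> B"
    and decay: "eventually (\<lambda>t. \<bar>f t\<bar> \<le> C * t powr (- q)) at_top" and "q > 1"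
  shows "set_integrable lborel {0..} f"
proof -
  obtain T where "T \<ge> 1" and T: "\<And>t. t \<ge> T \<Longrightarrow> \<bar>f t\<bar> \<le> C * t powr (- q)"
    using eventually_conj[OF decay eventually_ge_at_top[of 1]]
    unfolding eventually_at_top_linorder by blast
  define H where "H t = indicator {0..T} t * B + \<bar>C\<bar> * (indicator {T..} t * t powr (- q))" for t
  have "integrable lborel (\<lambda>t. indicator {T..} t * t powr (- q))"
    using \<open>T \<ge> 1\<close> \<open>q > 1\<close> by (intro integrable_indicator_powr_ray) auto
  then have H: "integrable lborel H"
    unfolding H_def
    by (intro Bochner_Integration.integrable_add integrable_mult_right)
      (use \<open>T \<ge> 1\<close> in \<open>auto simp: integrable_indicator_iff emeasure_lborel_Icc\<close>)
  have bound: "\<bar>indicator {0..} t * f t\<bar> \<le> H t" for t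
  proof -
    have "0 \<le> B" using bounded[of 0] by linarith
    moreover have "\<bar>f t\<bar> \<le> \<bar>C\<bar> * t powr (- q)" if "t \<ge> T"
      using T[OF that] abs_ge_self[of C] mult_right_mono[of C "\<bar>C\<bar>" "t powr (- q)"] by simp
    ultimately show ?thesis
      using bounded[of t] by (auto simp: H_def indicator_def)
  qed
  show ?thesis
    unfolding set_integrable_def
  proof (rule Bochner_Integration.integrable_bound[OF H])
    show "AE t in lborel. norm (indicator {0..} t *\<^sub>R f t) \<le> norm (H t)"
      using bound by (intro AE_I2) (auto intro: order_trans[OF _ abs_ge_self])
  qed simp
qed

lemma abs_le_sqrt_mult_powr_half:
  fixes x y \<mu> K :: real
  assumes "x\<^sup>2 \<le> K * y powr (- \<mu>)" "y > 0"
  shows "\<bar>x\<bar> \<le> sqrt K * y powr (- \<mu> / 2)"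
proof (rule power2_le_imp_le)
  have "0 < y powr (- \<mu>)" using assms(2) by simp
  moreover have "0 \<le> K * y powr (- \<mu>)" using assms(1) zero_le_power2[of x] by linarith
  ultimately have "0 \<le> K" by (simp add: zero_le_mult_iff)
  then have "(sqrt K * y powr (- \<mu> / 2))\<^sup>2 = K * (y powr (- \<mu> / 2) * y powr (- \<mu> / 2))"
    by (simp add: power2_eq_square algebra_simps)
  also have "\<dots> = K * y powr (- \<mu>)"
    by (simp add: powr_add[symmetric])
  finally show "\<bar>x\<bar>\<^sup>2 \<le> (sqrt K * y powr (- \<mu> / 2))\<^sup>2"
    using assms(1) by simp
  show "0 \<le> sqrt K * y powr (- \<mu> / 2)" using \<open>0 \<le> K\<close> by simp
qed

section \<open>The covariance function\<close>

locale stationary_gaussian_covariance = prob_space M for M :: "'a measure" +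
  fixes X :: "real \<Rightarrow> 'a \<Rightarrow> real" and r r' r'' :: "real \<Rightarrow> real"
  assumes gaussian: "centered_gaussian_process M X"
    and covariance: "\<And>t \<tau>. expectation (\<lambda>\<omega>. X t \<omega> * X (t + \<tau>) \<omega>) = r \<tau>"
    and r': "\<And>t. (r has_real_derivative r' t) (at t)"
    and r'': "\<And>t. (r' has_real_derivative r'' t) (at t)"
    and r_0: "r 0 = 1" and r''_0: "r'' 0 = -1"
begin

lemma expectation_process_mult: "expectation (\<lambda>\<omega>. X s \<omega> * X u \<omega>) = r (u - s)"
  using covariance[of s "u - s"] by simp

lemma r_minus: "r (- t) = r t"
  using expectation_process_mult[of t 0] expectation_process_mult[of 0 t] by (simp add: mult.commute)

lemma expectation_process_square: "expectation (\<lambda>\<omega>. (X s \<omega>)\<^sup>2) = 1"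
  using expectation_process_mult[of s s] r_0 by (simp add: power2_eq_square)

lemma integrable_process_mult: "integrable M (\<lambda>\<omega>. X s \<omega> * X u \<omega>)"
  using process_lincomb_square_integrable[OF gaussian process_lincomb_process, of _ UNIV]
  by (intro integrable_mult_of_square_integrable) auto

lemma square_expectation_process_lincomb_mult_le:
  assumes "process_lincomb X I A" "process_lincomb X J B"
  shows "(expectation (\<lambda>\<omega>. A \<omega> * B \<omega>))\<^sup>2 \<le> expectation (\<lambda>\<omega>. (A \<omega>)\<^sup>2) * expectation (\<lambda>\<omega>. (B \<omega>)\<^sup>2)"
  using process_lincomb_square_integrable[OF gaussian assms(1)]
    process_lincomb_square_integrable[OF gaussian assms(2)]
  by (intro Cauchy_Schwarz_integral) auto

lemma process_lincomb_diff_quotient: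
  assumes "p \<in> I" "q \<in> I"
  shows "process_lincomb X I (\<lambda>\<omega>. (X p \<omega> - X q \<omega>) / h)"
proof -
  have "process_lincomb X I (\<lambda>\<omega>. (1 / h) * (X p \<omega> + (- 1) * X q \<omega>))"
    using assms by (intro process_lincomb_scale process_lincomb_add process_lincomb_process)
  then show ?thesis by (simp add: diff_divide_distrib)
qed

lemma expectation_process_mult_diff_quotient:
  "expectation (\<lambda>\<omega>. X a \<omega> * ((X p \<omega> - X q \<omega>) / h)) = (r (p - a) - r (q - a)) / h"
proof -
  have "(\<lambda>\<omega>. X a \<omega> * ((X p \<omega> - X q \<omega>) / h)) = (\<lambda>\<omega>. (X a \<omega> * X p \<omega> - X a \<omega> * X q \<omega>) / h)"
    by (auto simp: algebra_simps)
  then show ?thesis using integrable_process_mult by (simp add: expectation_process_mult)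
qed

lemma expectation_diff_quotients_mult:
  "expectation (\<lambda>\<omega>. ((X p \<omega> - X q \<omega>) / h) * ((X p' \<omega> - X q' \<omega>) / h))
    = (r (p' - p) - r (q' - p) - r (p' - q) + r (q' - q)) / h\<^sup>2"
proof -
  have "(\<lambda>\<omega>. ((X p \<omega> - X q \<omega>) / h) * ((X p' \<omega> - X q' \<omega>) / h)) =
      (\<lambda>\<omega>. (X p \<omega> * X p' \<omega> - X p \<omega> * X q' \<omega> - X q \<omega> * X p' \<omega> + X q \<omega> * X q' \<omega>) / h\<^sup>2)"
    by (auto simp: algebra_simps power2_eq_square)
  then show ?thesis using integrable_process_mult by (simp add: expectation_process_mult)
qed

lemma expectation_diff_quotient_square:
  "expectation (\<lambda>\<omega>. ((X p \<omega> - X q \<omega>) / h)\<^sup>2) = (2 - 2 * r (p - q)) / h\<^sup>2"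
  using expectation_diff_quotients_mult[of p q h p q] r_minus[of "p - q"] r_0
  by (simp add: power2_eq_square)

lemma second_difference_tendsto:
  "((\<lambda>h. (2 * r t - r (t - h) - r (t + h)) / h\<^sup>2) \<longlongrightarrow> - r'' t) (at 0)"
proof -
  have "((\<lambda>h. - ((r (t + h) + r (t - h) - 2 * r t) / h\<^sup>2)) \<longlongrightarrow> - r'' t) (at 0)"
    by (intro tendsto_minus second_symmetric_difference_tendsto[where f=r and f'=r', OF r' r''])
  then show ?thesis by (simp add: minus_divide_left algebra_simps)
qed

lemma diff_quotient_variance_tendsto: "((\<lambda>h. (2 - 2 * r h) / h\<^sup>2) \<longlongrightarrow> 1) (at 0)"
  using second_difference_tendsto[of 0] by (simp add: r_0 r''_0 r_minus)

lemma abs_r_le_1: "\<bar>r t\<bar> \<le> 1"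
proof -
  have "(r t)\<^sup>2 \<le> 1"
    using square_expectation_process_lincomb_mult_le[OF process_lincomb_process process_lincomb_process, of 0 UNIV t UNIV]
    by (simp add: expectation_process_mult expectation_process_square)
  then show ?thesis by (simp add: abs_square_le_1)
qed

lemma abs_r'_le_1: "\<bar>r' t\<bar> \<le> 1"
proof -
  have "((r (t + h) - r t) / h)\<^sup>2 \<le> 1 * ((2 - 2 * r h) / h\<^sup>2)" for h
  proof -
    have "(expectation (\<lambda>\<omega>. X 0 \<omega> * ((X (t + h) \<omega> - X t \<omega>) / h)))\<^sup>2
        \<le> expectation (\<lambda>\<omega>. (X 0 \<omega>)\<^sup>2) * expectation (\<lambda>\<omega>. ((X (t + h) \<omega> - X t \<omega>) / h)\<^sup>2)"
      by (intro square_expectation_process_lincomb_mult_le[where I=UNIV and J=UNIV]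
          process_lincomb_process process_lincomb_diff_quotient) auto
    then show ?thesis
      by (simp only: expectation_process_mult_diff_quotient expectation_diff_quotient_square
          expectation_process_square) simp
  qed
  moreover have "((\<lambda>h. (r (t + h) - r t) / h) \<longlongrightarrow> r' t) (at 0)"
    using r'[of t] unfolding DERIV_def .
  ultimately have "(r' t)\<^sup>2 \<le> 1 * 1"
    by (intro tendsto_le[OF _ tendsto_mult[OF tendsto_const diff_quotient_variance_tendsto]
          tendsto_power always_eventually]) auto
  then show ?thesis by (simp add: abs_square_le_1)
qed

lemma abs_r''_le_1: "\<bar>r'' t\<bar> \<le> 1"
proof -
  have "((2 * r t - r (t - h) - r (t + h)) / h\<^sup>2)\<^sup>2 \<le> ((2 - 2 * r h) / h\<^sup>2) * ((2 - 2 * r h) / h\<^sup>2)" for h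
  proof -
    have "(expectation (\<lambda>\<omega>. ((X h \<omega> - X 0 \<omega>) / h) * ((X (t + h) \<omega> - X t \<omega>) / h)))\<^sup>2
        \<le> expectation (\<lambda>\<omega>. ((X h \<omega> - X 0 \<omega>) / h)\<^sup>2) * expectation (\<lambda>\<omega>. ((X (t + h) \<omega> - X t \<omega>) / h)\<^sup>2)"
      by (intro square_expectation_process_lincomb_mult_le[where I=UNIV and J=UNIV]
          process_lincomb_diff_quotient) auto
    then show ?thesis
      by (simp only: expectation_diff_quotients_mult expectation_diff_quotient_square)
        (simp add: algebra_simps)
  qed
  then have "(- r'' t)\<^sup>2 \<le> 1 * 1"
    by (intro tendsto_le[OF _ tendsto_mult[OF diff_quotient_variance_tendsto diff_quotient_variance_tendsto]
          tendsto_power[OF second_difference_tendsto] always_eventually]) auto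
  then show ?thesis by (simp add: abs_square_le_1)
qed

lemma r'_minus: "r' (- t) = - r' t"
proof -
  have "((\<lambda>x. r (- x)) has_real_derivative - r' (- t)) (at t)"
    using DERIV_mirror[where f=r and x=t] r'[of "- t"] by simp
  then have "(r has_real_derivative - r' (- t)) (at t)" by (simp add: r_minus)
  from DERIV_unique[OF r'[of t] this] show ?thesis by simp
qed

lemma r''_minus: "r'' (- t) = r'' t"
proof -
  have "((\<lambda>x. r' (- x)) has_real_derivative - r'' (- t)) (at t)"
    using DERIV_mirror[where f=r' and x=t] r''[of "- t"] by simp
  then have "((\<lambda>x. - r' x) has_real_derivative - r'' (- t)) (at t)" by (simp add: r'_minus)
  from DERIV_unique[OF DERIV_minus[OF r''[of t]] this] show ?thesis by simp
qed

lemma borel_measurable_r [measurable]: "r \<in> borel_measurable borel"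
  by (rule borel_measurable_continuous_onI, rule continuous_at_imp_continuous_on)
    (use r' DERIV_isCont in blast)

lemma borel_measurable_r' [measurable]: "r' \<in> borel_measurable borel"
  by (rule borel_measurable_continuous_onI, rule continuous_at_imp_continuous_on)
    (use r'' DERIV_isCont in blast)

lemma borel_measurable_r'' [measurable]: "r'' \<in> borel_measurable borel"
  by (rule borel_measurable_derivative[OF r'']) simp

lemma integrable_abs_powr_covariance:
  assumes "set_integrable lborel {0..} (\<lambda>\<tau>. \<bar>r \<tau>\<bar> + \<bar>r' \<tau>\<bar> + \<bar>r'' \<tau>\<bar>)" "p \<ge> 1"
  shows "integrable lborel (\<lambda>t. \<bar>r t\<bar> powr p) \<and> integrable lborel (\<lambda>t. \<bar>r' t\<bar> powr p) \<and>
    integrable lborel (\<lambda>t. \<bar>r'' t\<bar> powr p)"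
proof -
  have sum: "integrable lborel (\<lambda>\<tau>. \<bar>r \<tau>\<bar> + \<bar>r' \<tau>\<bar> + \<bar>r'' \<tau>\<bar>)"
    by (rule integrable_of_set_integrable_nonneg_even) (use assms(1) in \<open>simp_all add: r_minus r'_minus r''_minus\<close>)
  have dominated: "\<bar>r t\<bar> \<le> \<bar>r t\<bar> + \<bar>r' t\<bar> + \<bar>r'' t\<bar>" "\<bar>r' t\<bar> \<le> \<bar>r t\<bar> + \<bar>r' t\<bar> + \<bar>r'' t\<bar>"
    "\<bar>r'' t\<bar> \<le> \<bar>r t\<bar> + \<bar>r' t\<bar> + \<bar>r'' t\<bar>" for t
    by simp_all
  show ?thesis
    using integrable_abs_powr_of_dominated[OF borel_measurable_r sum abs_r_le_1 dominated(1) assms(2)]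
      integrable_abs_powr_of_dominated[OF borel_measurable_r' sum abs_r'_le_1 dominated(2) assms(2)]
      integrable_abs_powr_of_dominated[OF borel_measurable_r'' sum abs_r''_le_1 dominated(3) assms(2)]
    by blast
qed

lemma square_r_le_alpha_coeff:
  assumes "t \<ge> 0"
  shows "(r t)\<^sup>2 \<le> 16 * exp 1 * alpha_coeff M X t"
proof -
  have "(expectation (\<lambda>\<omega>. X 0 \<omega> * X t \<omega>))\<^sup>2 \<le> 16 * exp 1 * alpha_coeff M X t *
      (max (expectation (\<lambda>\<omega>. (X 0 \<omega>)\<^sup>2)) (expectation (\<lambda>\<omega>. (X t \<omega>)\<^sup>2)))\<^sup>2"
    by (rule square_expectation_mult_le_alpha_coeff[OF gaussian]) (use assms in \<open>auto intro: process_lincomb_process\<close>)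
  then show ?thesis by (simp add: expectation_process_mult expectation_process_square)
qed

lemma square_r'_le_alpha_coeff:
  assumes "t \<ge> 0"
  shows "(r' t)\<^sup>2 \<le> 16 * exp 1 * alpha_coeff M X t"
proof -
  have "((r (t + h) - r t) / h)\<^sup>2 \<le> 16 * exp 1 * alpha_coeff M X t * (max 1 ((2 - 2 * r h) / h\<^sup>2))\<^sup>2"
    if "h > 0" for h
  proof -
    have "(expectation (\<lambda>\<omega>. X 0 \<omega> * ((X (t + h) \<omega> - X t \<omega>) / h)))\<^sup>2 \<le> 16 * exp 1 * alpha_coeff M X t *
        (max (expectation (\<lambda>\<omega>. (X 0 \<omega>)\<^sup>2)) (expectation (\<lambda>\<omega>. ((X (t + h) \<omega> - X t \<omega>) / h)\<^sup>2)))\<^sup>2"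
      by (rule square_expectation_mult_le_alpha_coeff[OF gaussian])
        (use assms that in \<open>auto intro: process_lincomb_process process_lincomb_diff_quotient\<close>)
    then show ?thesis
      by (simp only: expectation_process_mult_diff_quotient expectation_diff_quotient_square
          expectation_process_square) simp
  qed
  moreover have "eventually (\<lambda>h. 0 < h) (at_right (0::real))"
    by (rule eventually_at_right_less)
  moreover have "((\<lambda>h. (r (t + h) - r t) / h) \<longlongrightarrow> r' t) (at_right 0)"
    using r'[of t] unfolding DERIV_def by (rule tendsto_mono[OF at_within_le_at])
  moreover have "((\<lambda>h. (2 - 2 * r h) / h\<^sup>2) \<longlongrightarrow> 1) (at_right 0)"
    by (rule tendsto_mono[OF at_within_le_at diff_quotient_variance_tendsto])
  ultimately have "(r' t)\<^sup>2 \<le> 16 * exp 1 * alpha_coeff M X t * (max 1 1)\<^sup>2"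
    by (intro tendsto_le[OF _ tendsto_mult[OF tendsto_const tendsto_power[OF tendsto_max[OF tendsto_const]]]
          tendsto_power]) (auto elim: eventually_mono)
  then show ?thesis by simp
qed

lemma square_r''_le_alpha_coeff:
  assumes "t \<ge> 2"
  shows "(r'' t)\<^sup>2 \<le> 16 * exp 1 * alpha_coeff M X (t / 2)"
proof -
  have "((2 * r t - r (t - h) - r (t + h)) / h\<^sup>2)\<^sup>2 \<le> 16 * exp 1 * alpha_coeff M X (t / 2) * ((2 - 2 * r h) / h\<^sup>2)\<^sup>2"
    if "- 1 < h" "h < 0" for h
  proof -
    have "(expectation (\<lambda>\<omega>. ((X h \<omega> - X 0 \<omega>) / h) * ((X (t + h) \<omega> - X t \<omega>) / h)))\<^sup>2
        \<le> 16 * exp 1 * alpha_coeff M X (t + h) * (max (expectation (\<lambda>\<omega>. ((X h \<omega> - X 0 \<omega>) / h)\<^sup>2))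
          (expectation (\<lambda>\<omega>. ((X (t + h) \<omega> - X t \<omega>) / h)\<^sup>2)))\<^sup>2"
      by (rule square_expectation_mult_le_alpha_coeff[OF gaussian])
        (use that in \<open>auto intro: process_lincomb_diff_quotient\<close>)
    \<comment> \<open>the second increment starts at \<open>t + h \<ge> t/2\<close>, as \<open>-1 < h\<close> and \<open>t \<ge> 2\<close>\<close>
    then have "((2 * r t - r (t - h) - r (t + h)) / h\<^sup>2)\<^sup>2 \<le> 16 * exp 1 * alpha_coeff M X (t + h) * ((2 - 2 * r h) / h\<^sup>2)\<^sup>2"
      by (simp only: expectation_diff_quotients_mult expectation_diff_quotient_square) (simp add: algebra_simps)
    also have "\<dots> \<le> 16 * exp 1 * alpha_coeff M X (t / 2) * ((2 - 2 * r h) / h\<^sup>2)\<^sup>2"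
      using assms that by (intro mult_right_mono mult_left_mono alpha_coeff_antimono) auto
    finally show ?thesis .
  qed
  moreover have "eventually (\<lambda>h. - 1 < h \<and> h < (0::real)) (at_left 0)"
    using eventually_at_left_real[of "- 1" 0] by (simp add: eventually_at_filter)
  ultimately have "(- r'' t)\<^sup>2 \<le> 16 * exp 1 * alpha_coeff M X (t / 2) * 1\<^sup>2"
    by (intro tendsto_le[OF _ tendsto_mult[OF tendsto_const tendsto_power[OF tendsto_mono[OF at_within_le_at
            diff_quotient_variance_tendsto]]] tendsto_power[OF tendsto_mono[OF at_within_le_at
            second_difference_tendsto]]]) (auto elim: eventually_mono)
  then show ?thesis by simp
qed

lemma eventually_abs_covariance_le_powr:
  assumes "alpha_coeff M X \<sim>[at_top] (\<lambda>T. T powr (- \<mu>))"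
  shows "eventually (\<lambda>t. \<bar>r t\<bar> + \<bar>r' t\<bar> + \<bar>r'' t\<bar>
    \<le> 3 * sqrt (32 * exp 1 * 2 powr \<mu>) * t powr (- \<mu> / 2)) at_top"
proof -
  have "eventually (\<lambda>T. alpha_coeff M X T \<le> 2 * T powr (- \<mu>)) at_top"
    using asymp_equiv_imp_eventually_le[OF assms, of 2] by (simp add: alpha_coeff_nonneg)
  moreover have "filterlim (\<lambda>t::real. t / 2) at_top at_top"
    unfolding filterlim_at_top
  proof
    fix Z :: real
    show "eventually (\<lambda>t. Z \<le> t / 2) at_top"
      using eventually_ge_at_top[of "2 * Z"] by eventually_elim simp
  qed
  ultimately have "eventually (\<lambda>t. alpha_coeff M X (t / 2) \<le> 2 * (t / 2) powr (- \<mu>)) at_top"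
    by (rule eventually_compose_filterlim)
  with eventually_ge_at_top[of 2] show ?thesis
  proof eventually_elim
    case (elim t)
    have "(t / 2) powr (- \<mu>) = 2 powr \<mu> * t powr (- \<mu>)"
      using elim by (simp add: powr_divide powr_minus_divide)
    then have decay: "16 * exp 1 * alpha_coeff M X (t / 2) \<le> 32 * exp 1 * 2 powr \<mu> * t powr (- \<mu>)"
      using elim by (simp add: ac_simps)
    have bound: "\<bar>f\<bar> \<le> sqrt (32 * exp 1 * 2 powr \<mu>) * t powr (- \<mu> / 2)"
      if "f\<^sup>2 \<le> 16 * exp 1 * alpha_coeff M X (t / 2)" for f
      by (rule abs_le_sqrt_mult_powr_half[OF order_trans[OF that decay]]) (use elim in simp)
    have "16 * exp 1 * alpha_coeff M X t \<le> 16 * exp 1 * alpha_coeff M X (t / 2)"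
      using elim by (intro mult_left_mono alpha_coeff_antimono) auto
    then have "(r t)\<^sup>2 \<le> 16 * exp 1 * alpha_coeff M X (t / 2)"
      "(r' t)\<^sup>2 \<le> 16 * exp 1 * alpha_coeff M X (t / 2)"
      using square_r_le_alpha_coeff[of t] square_r'_le_alpha_coeff[of t] elim by linarith+
    then have "\<bar>r t\<bar> \<le> sqrt (32 * exp 1 * 2 powr \<mu>) * t powr (- \<mu> / 2)"
      "\<bar>r' t\<bar> \<le> sqrt (32 * exp 1 * 2 powr \<mu>) * t powr (- \<mu> / 2)"
      "\<bar>r'' t\<bar> \<le> sqrt (32 * exp 1 * 2 powr \<mu>) * t powr (- \<mu> / 2)"
      using bound square_r''_le_alpha_coeff[of t] elim by blast+
    then show ?case by linarith
  qed
qed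

lemma set_integrable_covariance_of_alpha_decay:
  assumes "\<mu> > 2" "alpha_coeff M X \<sim>[at_top] (\<lambda>T. T powr (- \<mu>))"
  shows "set_integrable lborel {0..} (\<lambda>\<tau>. \<bar>r \<tau>\<bar> + \<bar>r' \<tau>\<bar> + \<bar>r'' \<tau>\<bar>)"
proof (rule set_integrable_ray_of_eventually_le_powr)
  show "eventually (\<lambda>t. \<bar>\<bar>r t\<bar> + \<bar>r' t\<bar> + \<bar>r'' t\<bar>\<bar>
      \<le> 3 * sqrt (32 * exp 1 * 2 powr \<mu>) * t powr (- (\<mu> / 2))) at_top"
    using eventually_abs_covariance_le_powr[OF assms(2)] by simp
  show "\<bar>\<bar>r t\<bar> + \<bar>r' t\<bar> + \<bar>r'' t\<bar>\<bar> \<le> 3" for t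
    using abs_r_le_1[of t] abs_r'_le_1[of t] abs_r''_le_1[of t] by simp
qed (use assms(1) in simp_all)

end

theorem lemma1:
  fixes M :: "'a measure" and X :: "real \<Rightarrow> 'a \<Rightarrow> real"
    and r r' r'' :: "real \<Rightarrow> real"
  assumes "prob_space M"
    and "centered_gaussian_process M X"
    and cov: "\<And>t \<tau>. prob_space.expectation M (\<lambda>\<omega>. X t \<omega> * X (t + \<tau>) \<omega>) = r \<tau>"
    and d1: "\<And>t. (r has_real_derivative r' t) (at t)"
    and d2: "\<And>t. (r' has_real_derivative r'' t) (at t)"
    and "r 0 = 1" and "r'' 0 = -1"
  shows "(\<forall>t. \<bar>r t\<bar> \<le> 1 \<and> \<bar>r' t\<bar> \<le> 1 \<and> \<bar>r'' t\<bar> \<le> 1)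
    \<and> (set_integrable lborel {0..} (\<lambda>\<tau>. \<bar>r \<tau>\<bar> + \<bar>r' \<tau>\<bar> + \<bar>r'' \<tau>\<bar>) \<longrightarrow>
         (\<forall>p::real. p \<ge> 1 \<longrightarrow>
            integrable lborel (\<lambda>t. \<bar>r t\<bar> powr p) \<and>
            integrable lborel (\<lambda>t. \<bar>r' t\<bar> powr p) \<and>
            integrable lborel (\<lambda>t. \<bar>r'' t\<bar> powr p)))
    \<and> (\<forall>\<mu>::real. \<mu> > 4 \<and> alpha_mixing M X \<and>
          (alpha_coeff M X \<sim>[at_top] (\<lambda>T. T powr (-\<mu>))) \<longrightarrow>
         (\<forall>p::real. p \<ge> 1 \<longrightarrow>
            integrable lborel (\<lambda>t. \<bar>r t\<bar> powr p) \<and>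
            integrable lborel (\<lambda>t. \<bar>r' t\<bar> powr p) \<and>
            integrable lborel (\<lambda>t. \<bar>r'' t\<bar> powr p))
         \<and> set_integrable lborel {0..} (\<lambda>\<tau>. \<bar>r \<tau>\<bar> + \<bar>r' \<tau>\<bar> + \<bar>r'' \<tau>\<bar>))"
proof -
  interpret stationary_gaussian_covariance M X r r' r''
    using assms unfolding stationary_gaussian_covariance_def stationary_gaussian_covariance_axioms_def
    by auto
  have bounded: "\<forall>t. \<bar>r t\<bar> \<le> 1 \<and> \<bar>r' t\<bar> \<le> 1 \<and> \<bar>r'' t\<bar> \<le> 1"
    using abs_r_le_1 abs_r'_le_1 abs_r''_le_1 by blast
  \<comment> \<open>only the decay rate of \<open>alpha_coeff\<close> is used; \<open>alpha_mixing M X\<close> is implied by it\<close>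
  have mixing: "set_integrable lborel {0..} (\<lambda>\<tau>. \<bar>r \<tau>\<bar> + \<bar>r' \<tau>\<bar> + \<bar>r'' \<tau>\<bar>)"
    if "\<mu> > 4" "alpha_coeff M X \<sim>[at_top] (\<lambda>T. T powr (- \<mu>))" for \<mu> :: real
    using that by (intro set_integrable_covariance_of_alpha_decay) auto
  show ?thesis
    using bounded integrable_abs_powr_covariance mixing by blast
qed

end
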